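(* Let $f(n,k)$ denote the number of standard Young tableaux with $n$ cells whose entry in row $1$, column $2$ is $k$, and let $t_m$ denote the number of involutions of $[m]$ (with $t_0=1$ and $t_m=0$ for $m<0$). Then for $1\le k\le n$, \[f(n,k)=\sum_{j=0}^{k-1}\binom{n-k}{k-j-1}t_{n-2k+j+2}-\binom{n-k}{k-1}t_{n-2k+1}-\binom{n-k}{k}t_{n-2k},\] where $\binom{a}{b}=0$ if $b>a$ or $b<0$.
   Context: $t_m$ also equals the number of standard Young tableaux with $m$ cells. A standard Young tableau with $n$ cells is a Ferrers diagram of a partition of $n$ filled bijectively with $1,\dots,n$, entries increasing along rows and down columns. *)

theory Defs
  imports Main "HOL-Library.FuncSet"
begin

text \<open>Partitions of n: weakly decreasing lists of positive naturals summing to n.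
  Rows and columns are indexed from 0, so row 1 column 2 is the cell (0,1).\<close>

definition is_partition :: "nat list \<Rightarrow> nat \<Rightarrow> bool" where
  "is_partition lam n \<longleftrightarrow> sorted_wrt (\<ge>) lam \<and> 0 \<notin> set lam \<and> sum_list lam = n"

definition cells :: "nat list \<Rightarrow> (nat \<times> nat) set" where
  "cells lam = {(i, j). i < length lam \<and> j < lam ! i}"

text \<open>T is taken extensional (undefined outside the cells) so that tableaux are counted once.\<close>

definition is_SYT :: "nat \<Rightarrow> nat list \<Rightarrow> (nat \<times> nat \<Rightarrow> nat) \<Rightarrow> bool" where
  "is_SYT n lam T \<longleftrightarrow> is_partition lam n \<and>
     T \<in> cells lam \<rightarrow>\<^sub>E {1..n} \<and> bij_betw T (cells lam) {1..n} \<and>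
     (\<forall>i j. (i, j) \<in> cells lam \<and> (i, Suc j) \<in> cells lam \<longrightarrow> T (i, j) < T (i, Suc j)) \<and>
     (\<forall>i j. (i, j) \<in> cells lam \<and> (Suc i, j) \<in> cells lam \<longrightarrow> T (i, j) < T (Suc i, j))"

definition f_syt :: "nat \<Rightarrow> nat \<Rightarrow> nat" where
  "f_syt n k = card {(lam, T). is_SYT n lam T \<and> (0, 1) \<in> cells lam \<and> T (0, 1) = k}"

definition involutions :: "nat \<Rightarrow> (nat \<Rightarrow> nat) set" where
  "involutions m = {p \<in> {1..m} \<rightarrow>\<^sub>E {1..m}. \<forall>x\<in>{1..m}. p (p x) = x}"

definition t_inv :: "int \<Rightarrow> int" where
  "t_inv m = (if m < 0 then 0 else int (card (involutions (nat m))))"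

definition binom :: "int \<Rightarrow> int \<Rightarrow> int" where
  "binom a b = (if b < 0 \<or> b > a \<or> a < 0 then 0 else int (nat a choose nat b))"

end

theory Submission
  imports Defs
begin

text \<open>
  A standard Young tableau with \<open>n\<close> cells is the same as a growth of the empty diagram by
  \<open>n\<close> cells added one at a time, the \<open>k\<close>-th cell added being the one that contains \<open>k\<close>.
  The entry \<open>k\<close> lies in row 1, column 2 exactly when the first \<open>k - 1\<close> cells form a column
  and the \<open>k\<close>-th one is \<open>(0, 1)\<close>. Since the only cells that can be added to a column of
  length \<open>m\<close> are \<open>(m, 0)\<close> and \<open>(0, 1)\<close>, \<open>f(n, k)\<close> is the number of growths of length
  \<open>n - k + 1\<close> of the column of length \<open>k - 1\<close> minus the number of growths of length
  \<open>n - k\<close> of the column of length \<open>k\<close>.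

  Growths are counted with the up and down operators of Young's lattice. Every diagram has
  exactly one more outer than inner corner, hence \<open>DU - UD = I\<close>, and induction on \<open>N\<close> shows
  that a diagram \<open>S\<close> has \<open>\<Sum>i. C(N, i) t(N - i) e\<^sub>i(S)\<close> growths of length \<open>N\<close>, where
  \<open>e\<^sub>i(S)\<close> counts the ways of removing \<open>i\<close> cells from \<open>S\<close> one at a time. For a column of
  length \<open>m\<close>, \<open>e\<^sub>i\<close> is 1 for \<open>i \<le> m\<close> and 0 otherwise, and Pascal's rule turns the
  difference of the two sums into the stated formula.
\<close>

section \<open>Involutions and telephone numbers\<close>

fun telephone :: "nat \<Rightarrow> nat" where
  "telephone 0 = 1"
| "telephone (Suc 0) = 1"
| "telephone (Suc (Suc n)) = telephone (Suc n) + Suc n * telephone n"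

lemma telephone_Suc: "telephone (Suc m) = telephone m + m * telephone (m - 1)"
  by (cases m) auto

definition involutions_on :: "'a set \<Rightarrow> ('a \<Rightarrow> 'a) set" where
  "involutions_on A = {p \<in> A \<rightarrow>\<^sub>E A. \<forall>x\<in>A. p (p x) = x}"

lemma finite_involutions_on: "finite A \<Longrightarrow> finite (involutions_on A)"
  unfolding involutions_on_def by (simp add: finite_PiE)

lemma restrict_mem_involutions_on:
  assumes "p \<in> involutions_on A" "a \<in> A" "p a = b"
  shows "restrict p (A - {a, b}) \<in> involutions_on (A - {a, b})"
proof -
  have p: "\<And>x. x \<in> A \<Longrightarrow> p x \<in> A" "\<And>x. x \<in> A \<Longrightarrow> p (p x) = x"
    using assms(1) unfolding involutions_on_def by auto
  have "p x \<in> A - {a, b}" if x: "x \<in> A - {a, b}" for x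
  proof -
    have "p x \<noteq> a" using x p(2) assms(3) by force
    moreover have "p x \<noteq> b" using x p(2)[of a] p(2)[of x] assms(2,3) by force
    ultimately show ?thesis using x p(1) by blast
  qed
  then show ?thesis
    using p unfolding involutions_on_def by auto
qed

lemma fun_upd_swap_mem_involutions_on:
  assumes "q \<in> involutions_on (A - {a, b})" "a \<in> A" "b \<in> A"
  shows "q(a := b, b := a) \<in> involutions_on A"
proof -
  have q: "\<And>x. x \<in> A - {a, b} \<Longrightarrow> q x \<in> A - {a, b}" "\<And>x. x \<in> A - {a, b} \<Longrightarrow> q (q x) = x"
    "\<And>x. x \<notin> A - {a, b} \<Longrightarrow> q x = undefined"
    using assms(1) unfolding involutions_on_def by (auto dest: PiE_arb)
  let ?p = "q(a := b, b := a)"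
  have ab: "?p a = b" "?p b = a" by simp_all
  have "?p x \<in> A" if "x \<in> A" for x
    using that assms(2,3) q(1)[of x] by (cases "x = a \<or> x = b") auto
  moreover have "?p x = undefined" if "x \<notin> A" for x
    using that assms(2,3) q(3)[of x] by auto
  moreover have "?p (?p x) = x" if "x \<in> A" for x
    using that ab q(1,2)[of x] by (cases "x = a \<or> x = b") auto
  ultimately show ?thesis
    unfolding involutions_on_def by (blast intro: PiE_I)
qed

lemma card_involutions_on_app_eq:
  assumes "a \<in> A" "b \<in> A"
  shows "card {p \<in> involutions_on A. p a = b} = card (involutions_on (A - {a, b}))"
proof (rule bij_betw_same_card[OF bij_betw_byWitness[where f' = "\<lambda>q. q(a := b, b := a)"]])
  show "\<forall>p\<in>{p \<in> involutions_on A. p a = b}. (restrict p (A - {a, b}))(a := b, b := a) = p"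
  proof (intro ballI ext)
    fix p x assume "p \<in> {p \<in> involutions_on A. p a = b}"
    then have p: "p \<in> A \<rightarrow>\<^sub>E A" "p a = b" "p b = a"
      using assms(1) unfolding involutions_on_def by auto
    consider "x \<in> A - {a, b}" | "x = a" | "x = b" | "x \<notin> A"
      by blast
    then show "((restrict p (A - {a, b}))(a := b, b := a)) x = p x"
      by cases (use p PiE_arb[OF p(1)] assms in auto)
  qed
  show "\<forall>q\<in>involutions_on (A - {a, b}). restrict (q(a := b, b := a)) (A - {a, b}) = q"
  proof
    fix q assume "q \<in> involutions_on (A - {a, b})"
    then have "q \<in> extensional (A - {a, b})"
      unfolding involutions_on_def by (simp add: PiE_iff)
    then show "restrict (q(a := b, b := a)) (A - {a, b}) = q"
      by (simp add: extensional_restrict cong: restrict_cong)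
  qed
  show "(\<lambda>p. restrict p (A - {a, b})) ` {p \<in> involutions_on A. p a = b} \<subseteq> involutions_on (A - {a, b})"
    using restrict_mem_involutions_on[OF _ assms(1)] by blast
  show "(\<lambda>q. q(a := b, b := a)) ` involutions_on (A - {a, b}) \<subseteq> {p \<in> involutions_on A. p a = b}"
    using fun_upd_swap_mem_involutions_on[OF _ assms] by auto
qed

lemma card_involutions_on_eq_sum:
  assumes "finite A" "a \<in> A"
  shows "card (involutions_on A) = (\<Sum>b\<in>A. card {p \<in> involutions_on A. p a = b})"
proof -
  have "involutions_on A = (\<Union>b\<in>A. {p \<in> involutions_on A. p a = b})"
    using assms(2) unfolding involutions_on_def by auto
  then have "card (involutions_on A) = card (\<Union>b\<in>A. {p \<in> involutions_on A. p a = b})"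
    by (rule arg_cong)
  also have "\<dots> = (\<Sum>b\<in>A. card {p \<in> involutions_on A. p a = b})"
    using finite_involutions_on[OF assms(1)] by (intro card_UN_disjoint) (use assms(1) in auto)
  finally show ?thesis .
qed

lemma card_involutions_on: "finite A \<Longrightarrow> card (involutions_on A) = telephone (card A)"
proof (induction "card A" arbitrary: A rule: less_induct)
  case less
  show ?case
  proof (cases "A = {}")
    case True
    then show ?thesis by (simp add: involutions_on_def)
  next
    case False
    then obtain a where a: "a \<in> A" by blast
    obtain m where m: "card A = Suc m"
      using less.prems False by (cases "card A") auto
    have "card (involutions_on A) = (\<Sum>b\<in>A. telephone (card (A - {a, b})))"
      unfolding card_involutions_on_eq_sum[OF less.prems a]
    proof (rule sum.cong[OF refl])
      fix b assume "b \<in> A"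
      moreover have "card (A - {a, b}) < card A"
        using a less.prems by (intro psubset_card_mono) auto
      ultimately show "card {p \<in> involutions_on A. p a = b} = telephone (card (A - {a, b}))"
        using card_involutions_on_app_eq[OF a] less.hyps less.prems by simp
    qed
    also have "\<dots> = telephone (card (A - {a})) + (\<Sum>b\<in>A - {a}. telephone (card (A - {a} - {b})))"
      using a less.prems by (simp add: sum.remove insert_commute Diff_insert2[symmetric])
    also have "\<dots> = telephone m + (\<Sum>b\<in>A - {a}. telephone (m - 1))"
      using a m less.prems by simp
    also have "\<dots> = telephone (card A)"
      using a m less.prems by (simp add: telephone_Suc)
    finally show ?thesis .
  qed
qed

lemma t_inv_eq_telephone: "t_inv (int m) = int (telephone m)"
proof -
  have "involutions m = involutions_on {1..m}"
    unfolding involutions_def involutions_on_def by simp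
  then show ?thesis
    unfolding t_inv_def by (simp add: card_involutions_on)
qed

section \<open>Young diagrams as down-closed sets of cells\<close>

definition down_closed :: "(nat \<times> nat) set \<Rightarrow> bool" where
  "down_closed S \<longleftrightarrow> (\<forall>i j i' j'. (i, j) \<in> S \<longrightarrow> i' \<le> i \<longrightarrow> j' \<le> j \<longrightarrow> (i', j') \<in> S)"

definition young_diagram :: "(nat \<times> nat) set \<Rightarrow> bool" where
  "young_diagram S \<longleftrightarrow> finite S \<and> down_closed S"

definition row_length :: "(nat \<times> nat) set \<Rightarrow> nat \<Rightarrow> nat" where
  "row_length S i = card {j. (i, j) \<in> S}"

definition outer_corners :: "(nat \<times> nat) set \<Rightarrow> (nat \<times> nat) set" where
  "outer_corners S = {c. c \<notin> S \<and> down_closed (insert c S)}"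

definition inner_corners :: "(nat \<times> nat) set \<Rightarrow> (nat \<times> nat) set" where
  "inner_corners S = {c. c \<in> S \<and> down_closed (S - {c})}"

lemma down_closedD: "down_closed S \<Longrightarrow> (i, j) \<in> S \<Longrightarrow> i' \<le> i \<Longrightarrow> j' \<le> j \<Longrightarrow> (i', j') \<in> S"
  unfolding down_closed_def by blast

lemma down_closedI:
  assumes "\<And>i j. (Suc i, j) \<in> S \<Longrightarrow> (i, j) \<in> S" "\<And>i j. (i, Suc j) \<in> S \<Longrightarrow> (i, j) \<in> S"
  shows "down_closed S"
proof -
  have col: "(i + d, j) \<in> S \<Longrightarrow> (i, j) \<in> S" for i j d
    by (induction d) (auto intro: assms(1))
  have row: "(i, j + d) \<in> S \<Longrightarrow> (i, j) \<in> S" for i j d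
    by (induction d) (auto intro: assms(2))
  show ?thesis
    unfolding down_closed_def using row[of _ _ "_ - _"] col[of _ "_ - _"] by (metis le_add_diff_inverse)
qed

lemma down_closed_nat_set_eq_lessThan:
  fixes B :: "nat set"
  assumes "finite B" "\<And>x y. x \<in> B \<Longrightarrow> y \<le> x \<Longrightarrow> y \<in> B"
  shows "B = {..<card B}"
proof (cases "B = {}")
  case False
  then have "B = {..Max B}"
    using assms by (auto intro: Max_ge Max_in)
  then show ?thesis by (metis card_atMost lessThan_Suc_atMost)
qed simp

lemma finite_row:
  assumes "finite S"
  shows "finite {j. (i, j) \<in> S}"
  using finite_imageI[OF assms, of snd] by (rule finite_subset[rotated]) force

lemma mem_young_diagram_iff:
  assumes "young_diagram S"
  shows "(i, j) \<in> S \<longleftrightarrow> j < row_length S i"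
proof -
  have "{j. (i, j) \<in> S} = {..<row_length S i}"
    unfolding row_length_def using assms unfolding young_diagram_def down_closed_def
    by (intro down_closed_nat_set_eq_lessThan finite_row) blast+
  then show ?thesis by blast
qed

lemma row_length_antimono:
  assumes "young_diagram S" "i \<le> i'"
  shows "row_length S i' \<le> row_length S i"
proof -
  have "j < row_length S i" if "j < row_length S i'" for j
    using that assms mem_young_diagram_iff[OF assms(1)] unfolding young_diagram_def down_closed_def
    by blast
  then show ?thesis by (meson not_le less_irrefl)
qed

lemma down_closed_insert_iff:
  assumes "down_closed S"
  shows "down_closed (insert (i, j) S) \<longleftrightarrow>
    (0 < i \<longrightarrow> (i - 1, j) \<in> S) \<and> (0 < j \<longrightarrow> (i, j - 1) \<in> S)"
proof
  assume "down_closed (insert (i, j) S)"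
  then have "(i - 1, j) \<in> insert (i, j) S" "(i, j - 1) \<in> insert (i, j) S"
    by (meson diff_le_self down_closedD insertI1 order_refl)+
  then show "(0 < i \<longrightarrow> (i - 1, j) \<in> S) \<and> (0 < j \<longrightarrow> (i, j - 1) \<in> S)"
    by (cases i; cases j) auto
next
  assume pred: "(0 < i \<longrightarrow> (i - 1, j) \<in> S) \<and> (0 < j \<longrightarrow> (i, j - 1) \<in> S)"
  show "down_closed (insert (i, j) S)"
    unfolding down_closed_def
  proof (intro allI impI)
    fix a b a' b' assume ab: "(a, b) \<in> insert (i, j) S" "a' \<le> a" "b' \<le> b"
    consider "(a, b) \<in> S" | "(a', b') = (i, j)" | "(a, b) = (i, j)" "a' \<le> i - 1" "0 < i"
      | "(a, b) = (i, j)" "b' \<le> j - 1" "0 < j"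
      using ab by fastforce
    then show "(a', b') \<in> insert (i, j) S"
    proof cases
      case 1
      then show ?thesis using ab assms by (blast intro: down_closedD)
    next
      case 3
      then show ?thesis using ab pred assms by (blast intro: down_closedD)
    next
      case 4
      then show ?thesis using ab pred assms by (blast intro: down_closedD)
    qed simp
  qed
qed

lemma down_closed_Diff_iff:
  assumes "down_closed S" "(i, j) \<in> S"
  shows "down_closed (S - {(i, j)}) \<longleftrightarrow> (Suc i, j) \<notin> S \<and> (i, Suc j) \<notin> S"
proof
  assume dc: "down_closed (S - {(i, j)})"
  have "(i, j) \<notin> S - {(i, j)}" by simp
  then show "(Suc i, j) \<notin> S \<and> (i, Suc j) \<notin> S"
    using down_closedD[OF dc, of "Suc i" j i j] down_closedD[OF dc, of i "Suc j" i j] by auto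
next
  assume succ: "(Suc i, j) \<notin> S \<and> (i, Suc j) \<notin> S"
  show "down_closed (S - {(i, j)})"
    unfolding down_closed_def
  proof (intro allI impI)
    fix a b a' b' assume ab: "(a, b) \<in> S - {(i, j)}" "a' \<le> a" "b' \<le> b"
    have "(a', b') \<noteq> (i, j)"
    proof
      assume "(a', b') = (i, j)"
      then have "Suc i \<le> a \<or> Suc j \<le> b" using ab by auto
      then show False
        using succ ab down_closedD[OF assms(1), of a b "Suc i" j] down_closedD[OF assms(1), of a b i "Suc j"]
          \<open>(a', b') = (i, j)\<close> by auto
    qed
    then show "(a', b') \<in> S - {(i, j)}"
      using ab down_closedD[OF assms(1)] by blast
  qed
qed

lemma outer_corners_eq:
  assumes "young_diagram S"
  shows "outer_corners S =
    (\<lambda>i. (i, row_length S i)) ` {i. i = 0 \<or> row_length S i < row_length S (i - 1)}"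
proof -
  have dc: "down_closed S" using assms young_diagram_def by simp
  have "(i, j) \<in> outer_corners S \<longleftrightarrow>
      j = row_length S i \<and> (i = 0 \<or> row_length S i < row_length S (i - 1))" for i j
    by (auto simp: outer_corners_def down_closed_insert_iff[OF dc] mem_young_diagram_iff[OF assms])
  then show ?thesis by fastforce
qed

lemma inner_corners_eq:
  assumes "young_diagram S"
  shows "inner_corners S =
    (\<lambda>i. (i, row_length S i - 1)) ` {i. row_length S (Suc i) < row_length S i}"
proof -
  have dc: "down_closed S" using assms young_diagram_def by simp
  have "(i, j) \<in> inner_corners S \<longleftrightarrow>
      j = row_length S i - 1 \<and> row_length S (Suc i) < row_length S i" for i j
  proof (cases "(i, j) \<in> S")
    case True
    then show ?thesis
      unfolding inner_corners_def using down_closed_Diff_iff[OF dc True]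
      by (auto simp: mem_young_diagram_iff[OF assms])
  qed (auto simp: inner_corners_def mem_young_diagram_iff[OF assms])
  then show ?thesis by fastforce
qed

lemma finite_row_descents:
  assumes "young_diagram S"
  shows "finite {i. row_length S (Suc i) < row_length S i}"
proof -
  have "{i. row_length S (Suc i) < row_length S i} \<subseteq> fst ` S"
    using mem_young_diagram_iff[OF assms, of _ 0] by force
  then show ?thesis
    using assms unfolding young_diagram_def by (blast intro: finite_subset)
qed

lemma finite_inner_corners: "young_diagram S \<Longrightarrow> finite (inner_corners S)"
  by (simp add: inner_corners_eq finite_row_descents)

lemma
  assumes S: "young_diagram S"
  shows finite_outer_corners: "finite (outer_corners S)"
    and card_outer_corners: "card (outer_corners S) = Suc (card (inner_corners S))"
proof -
  let ?D = "{i. row_length S (Suc i) < row_length S i}"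
  have rows: "{i. i = 0 \<or> row_length S i < row_length S (i - 1)} = insert 0 (Suc ` ?D)"
  proof (intro set_eqI)
    show "i \<in> {i. i = 0 \<or> row_length S i < row_length S (i - 1)} \<longleftrightarrow> i \<in> insert 0 (Suc ` ?D)" for i
      by (cases i) auto
  qed
  show "finite (outer_corners S)"
    using finite_row_descents[OF S] unfolding outer_corners_eq[OF S] rows by simp
  have "card (outer_corners S) = card (insert 0 (Suc ` ?D))"
    unfolding outer_corners_eq[OF S] rows by (rule card_image) (auto simp: inj_on_def)
  also have "\<dots> = Suc (card ?D)"
    using finite_row_descents[OF S] by (simp add: card_image)
  also have "card ?D = card (inner_corners S)"
    unfolding inner_corners_eq[OF S] by (rule card_image[symmetric]) (auto simp: inj_on_def)
  finally show "card (outer_corners S) = Suc (card (inner_corners S))" .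
qed

lemma young_diagram_insert_outer_corner:
  "young_diagram S \<Longrightarrow> c \<in> outer_corners S \<Longrightarrow> young_diagram (insert c S)"
  unfolding young_diagram_def outer_corners_def by auto

lemma young_diagram_Diff_inner_corner:
  "young_diagram S \<Longrightarrow> d \<in> inner_corners S \<Longrightarrow> young_diagram (S - {d})"
  unfolding young_diagram_def inner_corners_def by auto

lemma outer_corner_imp_inner_corner:
  "down_closed S \<Longrightarrow> c \<in> outer_corners S \<Longrightarrow> c \<in> inner_corners (insert c S)"
  unfolding outer_corners_def inner_corners_def by auto

lemma inner_corner_imp_outer_corner:
  "down_closed S \<Longrightarrow> d \<in> inner_corners S \<Longrightarrow> d \<in> outer_corners (S - {d})"
  unfolding outer_corners_def inner_corners_def by (auto simp: insert_absorb)

lemma down_closed_Un: "down_closed A \<Longrightarrow> down_closed B \<Longrightarrow> down_closed (A \<union> B)"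
  unfolding down_closed_def by blast

lemma down_closed_Int: "down_closed A \<Longrightarrow> down_closed B \<Longrightarrow> down_closed (A \<inter> B)"
  unfolding down_closed_def by blast

lemma add_remove_corners_swap:
  assumes "down_closed S" "c \<noteq> d"
  shows "c \<in> outer_corners S \<and> d \<in> inner_corners (insert c S) \<longleftrightarrow>
    d \<in> inner_corners S \<and> c \<in> outer_corners (S - {d})"
proof -
  have swap: "insert c (S - {d}) = insert c S - {d}"
    using assms(2) by auto
  show ?thesis
  proof
    assume "c \<in> outer_corners S \<and> d \<in> inner_corners (insert c S)"
    then have c: "c \<notin> S" and d: "d \<in> S" "down_closed (insert c S - {d})"
      using assms(2) unfolding outer_corners_def inner_corners_def by auto
    have "S - {d} = S \<inter> (insert c S - {d})"
      using c by auto
    then have "down_closed (S - {d})"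
      using down_closed_Int[OF assms(1) d(2)] by simp
    then show "d \<in> inner_corners S \<and> c \<in> outer_corners (S - {d})"
      using c d unfolding outer_corners_def inner_corners_def by (simp add: swap)
  next
    assume "d \<in> inner_corners S \<and> c \<in> outer_corners (S - {d})"
    then have d: "d \<in> S" and c: "c \<notin> S" "down_closed (insert c (S - {d}))"
      using assms(2) unfolding outer_corners_def inner_corners_def by auto
    have "insert c S = S \<union> insert c (S - {d})"
      using d by auto
    then have "down_closed (insert c S)"
      using down_closed_Un[OF assms(1) c(2)] by simp
    then show "c \<in> outer_corners S \<and> d \<in> inner_corners (insert c S)"
      using c d unfolding outer_corners_def inner_corners_def by (simp add: swap[symmetric])
  qed
qed

section \<open>Young's lattice is a differential poset\<close>

text \<open>
  \<open>up_op\<close> and \<open>down_op\<close> are the transposes of the up and down operators \<open>U\<close>, \<open>D\<close> of Young's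
  lattice, acting on functions of diagrams; \<open>up_down_commute\<close> is the relation \<open>DU - UD = I\<close>.
\<close>

definition up_op :: "((nat \<times> nat) set \<Rightarrow> int) \<Rightarrow> (nat \<times> nat) set \<Rightarrow> int" where
  "up_op f S = (\<Sum>c\<in>outer_corners S. f (insert c S))"

definition down_op :: "((nat \<times> nat) set \<Rightarrow> int) \<Rightarrow> (nat \<times> nat) set \<Rightarrow> int" where
  "down_op f S = (\<Sum>d\<in>inner_corners S. f (S - {d}))"

lemma up_op_down_op_eq:
  assumes S: "young_diagram S"
  shows "up_op (down_op f) S = of_nat (card (outer_corners S)) * f S +
    (\<Sum>(c, d)\<in>(SIGMA c:outer_corners S. inner_corners (insert c S) - {c}). f (insert c S - {d}))"
proof -
  have dc: "down_closed S" using S young_diagram_def by simp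
  have "up_op (down_op f) S =
      (\<Sum>c\<in>outer_corners S. f S + (\<Sum>d\<in>inner_corners (insert c S) - {c}. f (insert c S - {d})))"
    unfolding up_op_def down_op_def
  proof (rule sum.cong[OF refl])
    fix c assume c: "c \<in> outer_corners S"
    then have "insert c S - {c} = S" unfolding outer_corners_def by auto
    then show "(\<Sum>d\<in>inner_corners (insert c S). f (insert c S - {d})) =
        f S + (\<Sum>d\<in>inner_corners (insert c S) - {c}. f (insert c S - {d}))"
      using finite_inner_corners[OF young_diagram_insert_outer_corner[OF S c]]
        outer_corner_imp_inner_corner[OF dc c] by (simp add: sum.remove)
  qed
  then show ?thesis
    using finite_outer_corners[OF S] finite_inner_corners[OF young_diagram_insert_outer_corner[OF S]]
    by (simp add: sum.distrib sum.Sigma)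
qed

lemma sum_corner_pairs_swap:
  assumes "down_closed S"
  shows "(\<Sum>(d, c)\<in>(SIGMA d:inner_corners S. outer_corners (S - {d}) - {d}). f (insert c (S - {d}))) =
    (\<Sum>(c, d)\<in>(SIGMA c:outer_corners S. inner_corners (insert c S) - {c}). f (insert c S - {d}))"
proof (rule sum.reindex_bij_witness[of _ prod.swap prod.swap])
  fix x assume "x \<in> (SIGMA d:inner_corners S. outer_corners (S - {d}) - {d})"
  moreover obtain d c where "x = (d, c)" by (metis surj_pair)
  ultimately show "prod.swap x \<in> (SIGMA c:outer_corners S. inner_corners (insert c S) - {c})"
    and "(case prod.swap x of (c, d) \<Rightarrow> f (insert c S - {d})) = (case x of (d, c) \<Rightarrow> f (insert c (S - {d})))"
    using add_remove_corners_swap[OF assms, of c d] by (auto simp: insert_Diff_if)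
next
  fix y assume "y \<in> (SIGMA c:outer_corners S. inner_corners (insert c S) - {c})"
  moreover obtain c d where "y = (c, d)" by (metis surj_pair)
  ultimately show "prod.swap y \<in> (SIGMA d:inner_corners S. outer_corners (S - {d}) - {d})"
    using add_remove_corners_swap[OF assms, of c d] by auto
qed simp_all

lemma down_op_up_op_eq:
  assumes S: "young_diagram S"
  shows "down_op (up_op f) S = of_nat (card (inner_corners S)) * f S +
    (\<Sum>(c, d)\<in>(SIGMA c:outer_corners S. inner_corners (insert c S) - {c}). f (insert c S - {d}))"
proof -
  have dc: "down_closed S" using S young_diagram_def by simp
  have "down_op (up_op f) S =
      (\<Sum>d\<in>inner_corners S. f S + (\<Sum>c\<in>outer_corners (S - {d}) - {d}. f (insert c (S - {d}))))"
    unfolding up_op_def down_op_def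
  proof (rule sum.cong[OF refl])
    fix d assume d: "d \<in> inner_corners S"
    then have "insert d (S - {d}) = S" unfolding inner_corners_def by auto
    then show "(\<Sum>c\<in>outer_corners (S - {d}). f (insert c (S - {d}))) =
        f S + (\<Sum>c\<in>outer_corners (S - {d}) - {d}. f (insert c (S - {d})))"
      using finite_outer_corners[OF young_diagram_Diff_inner_corner[OF S d]]
        inner_corner_imp_outer_corner[OF dc d] by (simp add: sum.remove)
  qed
  then show ?thesis
    using finite_inner_corners[OF S] finite_outer_corners[OF young_diagram_Diff_inner_corner[OF S]]
    by (simp add: sum.distrib sum.Sigma sum_corner_pairs_swap[OF dc])
qed

lemma up_down_commute: "young_diagram S \<Longrightarrow> up_op (down_op f) S = down_op (up_op f) S + f S"
  by (simp add: up_op_down_op_eq down_op_up_op_eq card_outer_corners algebra_simps)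

lemma down_op_cong:
  assumes "\<And>S'. young_diagram S' \<Longrightarrow> f S' = g S'" "young_diagram S"
  shows "down_op f S = down_op g S"
  unfolding down_op_def using assms young_diagram_Diff_inner_corner by (intro sum.cong) auto

lemma down_op_add: "down_op (\<lambda>S. f S + g S) = (\<lambda>S. down_op f S + down_op g S)"
  unfolding down_op_def by (simp add: sum.distrib)

lemma down_op_mult: "down_op (\<lambda>S. a * f S) = (\<lambda>S. a * down_op f S)"
  unfolding down_op_def by (simp add: sum_distrib_left)

lemma funpow_down_op_cong:
  assumes "\<And>S'. young_diagram S' \<Longrightarrow> f S' = g S'" "young_diagram S"
  shows "(down_op ^^ k) f S = (down_op ^^ k) g S"
  using assms(2)
proof (induction k arbitrary: S)
  case (Suc k)
  have "down_op ((down_op ^^ k) f) S = down_op ((down_op ^^ k) g) S"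
    by (rule down_op_cong[OF Suc.IH Suc.prems])
  then show ?case by simp
qed (simp add: assms(1))

lemma funpow_down_op_add:
  "(down_op ^^ k) (\<lambda>S. f S + g S) = (\<lambda>S. (down_op ^^ k) f S + (down_op ^^ k) g S)"
  by (induction k) (simp_all add: down_op_add)

lemma up_funpow_down_commute:
  assumes "young_diagram S"
  shows "up_op ((down_op ^^ k) f) S = (down_op ^^ k) (up_op f) S + of_nat k * (down_op ^^ (k - 1)) f S"
  using assms
proof (induction k arbitrary: S)
  case (Suc k)
  have "up_op ((down_op ^^ Suc k) f) S = down_op (up_op ((down_op ^^ k) f)) S + (down_op ^^ k) f S"
    using up_down_commute[OF Suc.prems] by simp
  also have "down_op (up_op ((down_op ^^ k) f)) S =
      down_op (\<lambda>S. (down_op ^^ k) (up_op f) S + of_nat k * (down_op ^^ (k - 1)) f S) S"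
    using Suc by (intro down_op_cong) auto
  also have "\<dots> = (down_op ^^ Suc k) (up_op f) S + of_nat k * down_op ((down_op ^^ (k - 1)) f) S"
    by (simp add: down_op_add down_op_mult)
  also have "of_nat k * down_op ((down_op ^^ (k - 1)) f) S = of_nat k * (down_op ^^ k) f S"
    by (cases k) auto
  finally show ?case by (simp add: algebra_simps)
qed simp

definition down_chain_count :: "(nat \<times> nat) set \<Rightarrow> nat \<Rightarrow> int" where
  "down_chain_count S i = (down_op ^^ i) (\<lambda>_. 1) S"

lemma up_op_down_chain_count:
  assumes "young_diagram S"
  shows "up_op (\<lambda>S'. down_chain_count S' i) S =
    down_chain_count S (Suc i) + down_chain_count S i + of_nat i * down_chain_count S (i - 1)"
proof -
  have up_one: "up_op (\<lambda>_. 1) S' = down_op (\<lambda>_. 1) S' + 1" if "young_diagram S'" for S'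
    unfolding up_op_def down_op_def using card_outer_corners[OF that] by simp
  have "up_op (\<lambda>S'. down_chain_count S' i) S =
      (down_op ^^ i) (up_op (\<lambda>_. 1)) S + of_nat i * down_chain_count S (i - 1)"
    using up_funpow_down_commute[OF assms, of i "\<lambda>_. 1"]
    unfolding down_chain_count_def by (simp add: eta_contract_eq)
  also have "(down_op ^^ i) (up_op (\<lambda>_. 1)) S = (down_op ^^ i) (\<lambda>S. down_op (\<lambda>_. 1) S + 1) S"
    using up_one assms by (intro funpow_down_op_cong) auto
  also have "\<dots> = (down_op ^^ i) (down_op (\<lambda>_. 1)) S + down_chain_count S i"
    unfolding down_chain_count_def by (subst funpow_down_op_add) (simp add: eta_contract_eq)
  also have "(down_op ^^ i) (down_op (\<lambda>_. 1)) S = down_chain_count S (Suc i)"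
    unfolding down_chain_count_def by (simp add: funpow_Suc_right del: funpow.simps)
  finally show ?thesis by simp
qed

section \<open>Counting growths\<close>

text \<open>
  Growths of \<open>S\<close> by \<open>N\<close> cells are the saturated chains of length \<open>N\<close> upwards from \<open>S\<close>
  in Young's lattice, recorded by the sequence of added cells.
\<close>

definition growths :: "(nat \<times> nat) set \<Rightarrow> nat \<Rightarrow> (nat \<times> nat) list set" where
  "growths S N = {xs. length xs = N \<and> distinct xs \<and> set xs \<inter> S = {} \<and>
     (\<forall>j. down_closed (S \<union> set (take j xs)))}"

lemma growths_0: "down_closed S \<Longrightarrow> growths S 0 = {[]}"
  unfolding growths_def by auto

lemma Cons_mem_growths_iff:
  assumes "down_closed S"
  shows "c # ys \<in> growths S (Suc N) \<longleftrightarrow> c \<in> outer_corners S \<and> ys \<in> growths (insert c S) N"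
proof -
  have "(\<forall>j. down_closed (S \<union> set (take j (c # ys)))) \<longleftrightarrow>
      down_closed (insert c S) \<and> (\<forall>j. down_closed (insert c S \<union> set (take j ys)))"
  proof
    assume h: "\<forall>j. down_closed (S \<union> set (take j (c # ys)))"
    have "down_closed (insert c (S \<union> set (take j ys)))" for j
      using h[rule_format, of "Suc j"] by simp
    then show "down_closed (insert c S) \<and> (\<forall>j. down_closed (insert c S \<union> set (take j ys)))"
      using take0 by (metis Un_empty_right Un_insert_left empty_set)
  next
    assume h: "down_closed (insert c S) \<and> (\<forall>j. down_closed (insert c S \<union> set (take j ys)))"
    show "\<forall>j. down_closed (S \<union> set (take j (c # ys)))"
    proof
      fix j show "down_closed (S \<union> set (take j (c # ys)))"
        using assms h by (cases j) auto
    qed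
  qed
  then show ?thesis
    unfolding growths_def outer_corners_def by auto
qed

lemma growths_Suc:
  assumes "down_closed S"
  shows "growths S (Suc N) = (\<lambda>(c, ys). c # ys) ` (SIGMA c:outer_corners S. growths (insert c S) N)"
proof (intro set_eqI iffI)
  fix xs assume xs: "xs \<in> growths S (Suc N)"
  then obtain c ys where cys: "xs = c # ys"
    unfolding growths_def by (cases xs) auto
  then have "c \<in> outer_corners S" "ys \<in> growths (insert c S) N"
    using xs Cons_mem_growths_iff[OF assms] by auto
  then show "xs \<in> (\<lambda>(c, ys). c # ys) ` (SIGMA c:outer_corners S. growths (insert c S) N)"
    using cys by (intro image_eqI[of _ _ "(c, ys)"]) auto
next
  fix xs assume "xs \<in> (\<lambda>(c, ys). c # ys) ` (SIGMA c:outer_corners S. growths (insert c S) N)"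
  then obtain c ys where "xs = c # ys" "c \<in> outer_corners S" "ys \<in> growths (insert c S) N"
    by auto
  then show "xs \<in> growths S (Suc N)"
    using Cons_mem_growths_iff[OF assms] by simp
qed

lemma finite_growths: "young_diagram S \<Longrightarrow> finite (growths S N)"
proof (induction N arbitrary: S)
  case 0
  then show ?case using growths_0 young_diagram_def by simp
next
  case (Suc N)
  then show ?case
    using finite_outer_corners young_diagram_insert_outer_corner
    by (simp add: growths_Suc young_diagram_def)
qed

lemma card_growths_Suc:
  assumes "young_diagram S"
  shows "card (growths S (Suc N)) = (\<Sum>c\<in>outer_corners S. card (growths (insert c S) N))"
proof -
  have "inj_on (\<lambda>(c, ys). c # ys) (SIGMA c:outer_corners S. growths (insert c S) N)"
    by (auto simp: inj_on_def)
  then show ?thesis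
    using assms finite_outer_corners[OF assms] finite_growths young_diagram_insert_outer_corner
    by (simp add: growths_Suc young_diagram_def card_image card_SigmaI)
qed

lemma Suc_times_binomial_Suc: "Suc k * (n choose Suc k) = (n - k) * (n choose k)"
  by (simp only: binomial_absorption binomial_absorb_comp)

lemma telephone_binomial_sum_Suc:
  fixes a :: "nat \<Rightarrow> int"
  shows "(\<Sum>i\<le>N. of_nat ((N choose i) * telephone (N - i)) * (a (Suc i) + a i + of_nat i * a (i - 1))) =
    (\<Sum>i\<le>Suc N. of_nat ((Suc N choose i) * telephone (Suc N - i)) * a i)"
proof -
  define w :: "nat \<Rightarrow> nat \<Rightarrow> int" where "w N i = of_nat ((N choose i) * telephone (N - i))" for N i
  have pascal: "(\<Sum>i\<le>Suc N. w (Suc N) i * a i) =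
      (\<Sum>i\<le>N. w N i * a (Suc i)) + (\<Sum>i\<le>Suc N. of_nat ((N choose i) * telephone (Suc N - i)) * a i)"
    unfolding w_def by (simp only: sum.atMost_Suc_shift) (simp add: algebra_simps sum.distrib)
  have recurrence: "(\<Sum>i\<le>Suc N. of_nat ((N choose i) * telephone (Suc N - i)) * a i) =
      (\<Sum>i\<le>N. w N i * a i) + (\<Sum>i\<le>N. of_nat ((N - i) * (N choose i) * telephone (N - i - 1)) * a i)"
  proof -
    have "(\<Sum>i\<le>Suc N. of_nat ((N choose i) * telephone (Suc N - i)) * a i) =
        (\<Sum>i\<le>N. of_nat ((N choose i) * telephone (Suc N - i)) * a i)"
      by simp
    also have "\<dots> = (\<Sum>i\<le>N. w N i * a i + of_nat ((N - i) * (N choose i) * telephone (N - i - 1)) * a i)"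
      by (rule sum.cong[OF refl]) (simp add: w_def Suc_diff_le telephone_Suc add_mult_distrib2 distrib_left mult_ac)
    finally show ?thesis
      by (simp add: sum.distrib)
  qed
  have absorption: "(\<Sum>i\<le>N. of_nat ((N - i) * (N choose i) * telephone (N - i - 1)) * a i) =
      (\<Sum>i\<le>N. w N i * (of_nat i * a (i - 1)))"
  proof -
    have "(\<Sum>i\<le>N. of_nat ((N - i) * (N choose i) * telephone (N - i - 1)) * a i) =
        (\<Sum>i\<le>N. of_nat (Suc i * (N choose Suc i) * telephone (N - i - 1)) * a i)"
      by (simp only: Suc_times_binomial_Suc)
    also have "\<dots> = (\<Sum>i\<le>Suc N. w N i * (of_nat i * a (i - 1)))"
      unfolding w_def by (subst sum.atMost_Suc_shift) (simp add: algebra_simps)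
    also have "\<dots> = (\<Sum>i\<le>N. w N i * (of_nat i * a (i - 1)))"
      unfolding w_def by simp
    finally show ?thesis .
  qed
  have "(\<Sum>i\<le>N. w N i * (a (Suc i) + a i + of_nat i * a (i - 1))) = (\<Sum>i\<le>Suc N. w (Suc N) i * a i)"
    unfolding pascal recurrence absorption by (simp add: algebra_simps sum.distrib)
  then show ?thesis
    unfolding w_def .
qed

lemma card_growths:
  assumes "young_diagram S"
  shows "int (card (growths S N)) =
    (\<Sum>i\<le>N. of_nat ((N choose i) * telephone (N - i)) * down_chain_count S i)"
  using assms
proof (induction N arbitrary: S)
  case 0
  then show ?case
    using growths_0 by (simp add: young_diagram_def down_chain_count_def)
next
  case (Suc N)
  have "int (card (growths S (Suc N))) =
      (\<Sum>c\<in>outer_corners S. \<Sum>i\<le>N. of_nat ((N choose i) * telephone (N - i)) * down_chain_count (insert c S) i)"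
    using Suc.IH young_diagram_insert_outer_corner[OF Suc.prems] by (simp add: card_growths_Suc[OF Suc.prems])
  also have "\<dots> = (\<Sum>i\<le>N. of_nat ((N choose i) * telephone (N - i)) * up_op (\<lambda>S'. down_chain_count S' i) S)"
    unfolding up_op_def by (subst sum.swap) (simp add: sum_distrib_left)
  also have "\<dots> = (\<Sum>i\<le>Suc N. of_nat ((Suc N choose i) * telephone (Suc N - i)) * down_chain_count S i)"
    unfolding up_op_down_chain_count[OF Suc.prems] by (rule telephone_binomial_sum_Suc)
  finally show ?case .
qed

definition column :: "nat \<Rightarrow> (nat \<times> nat) set" where
  "column m = (\<lambda>i. (i, 0)) ` {..<m}"

lemma mem_column_iff: "(i, j) \<in> column m \<longleftrightarrow> j = 0 \<and> i < m"
  unfolding column_def by auto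

lemma young_diagram_column: "young_diagram (column m)"
  unfolding young_diagram_def down_closed_def column_def by auto

lemma column_Suc: "column (Suc m) = insert (m, 0) (column m)"
  unfolding column_def by (simp add: lessThan_Suc)

lemma inner_corners_column_Suc: "inner_corners (column (Suc m)) = {(m, 0)}"
proof -
  have dc: "down_closed (column (Suc m))"
    using young_diagram_column young_diagram_def by blast
  have "(i, j) \<in> inner_corners (column (Suc m)) \<longleftrightarrow> (i, j) = (m, 0)" for i j
    by (auto simp: inner_corners_def down_closed_Diff_iff[OF dc] mem_column_iff)
  then show ?thesis by auto
qed

lemma outer_corners_column: "outer_corners (column m) \<subseteq> {(m, 0), (0, 1)}"
proof -
  have dc: "down_closed (column m)"
    using young_diagram_column young_diagram_def by blast
  have "(i, j) \<in> outer_corners (column m) \<Longrightarrow> (i, j) \<in> {(m, 0), (0, 1)}" for i j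
    by (auto simp: outer_corners_def down_closed_insert_iff[OF dc] mem_column_iff)
  then show ?thesis by auto
qed

lemma down_chain_count_column: "down_chain_count (column m) i = (if i \<le> m then 1 else 0)"
proof (induction i arbitrary: m)
  case 0
  then show ?case by (simp add: down_chain_count_def)
next
  case (Suc i)
  have "down_chain_count (column m) (Suc i) = down_op (\<lambda>S. down_chain_count S i) (column m)"
    unfolding down_chain_count_def by simp
  also have "\<dots> = (if Suc i \<le> m then 1 else 0)"
  proof (cases m)
    case 0
    then show ?thesis by (simp add: down_op_def inner_corners_def column_def)
  next
    case (Suc m')
    have "column (Suc m') - {(m', 0)} = column m'"
      by (auto simp: column_Suc mem_column_iff)
    then show ?thesis
      using Suc.IH by (simp add: Suc down_op_def inner_corners_column_Suc)
  qed
  finally show ?case .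
qed

lemma card_growths_column:
  "int (card (growths (column m) N)) = (\<Sum>i\<le>m. of_nat ((N choose i) * telephone (N - i)))"
proof -
  have "int (card (growths (column m) N)) =
      (\<Sum>i\<le>N. of_nat ((N choose i) * telephone (N - i)) * (if i \<le> m then 1 else 0))"
    using card_growths[OF young_diagram_column] by (simp add: down_chain_count_column)
  also have "\<dots> = (\<Sum>i\<le>min N m. of_nat ((N choose i) * telephone (N - i)))"
    by (rule sum.mono_neutral_cong_right) auto
  also have "\<dots> = (\<Sum>i\<le>m. of_nat ((N choose i) * telephone (N - i)))"
    by (rule sum.mono_neutral_left) auto
  finally show ?thesis .
qed

section \<open>Growths that begin with a column\<close>

lemma append_mem_growths_iff:
  assumes "down_closed S"
  shows "xs @ ys \<in> growths S (length xs + N) \<longleftrightarrow>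
    xs \<in> growths S (length xs) \<and> ys \<in> growths (S \<union> set xs) N"
  using assms
proof (induction xs arbitrary: S)
  case Nil
  then show ?case using growths_0 by simp
next
  case (Cons c xs)
  show ?case
  proof (cases "c \<in> outer_corners S")
    case True
    then have "down_closed (insert c S)" unfolding outer_corners_def by simp
    then show ?thesis
      using Cons.IH[of "insert c S"] Cons_mem_growths_iff[OF Cons.prems] True by simp
  qed (simp add: Cons_mem_growths_iff[OF Cons.prems])
qed

lemma nth_notin_set_take: "distinct xs \<Longrightarrow> j < length xs \<Longrightarrow> xs ! j \<notin> set (take j xs)"
  by (auto simp: in_set_conv_nth nth_eq_iff_index_eq)

lemma nth_growth_mem_outer_corners:
  assumes "xs \<in> growths S N" "j < N"
  shows "xs ! j \<in> outer_corners (S \<union> set (take j xs))"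
proof -
  have xs: "length xs = N" "distinct xs" "set xs \<inter> S = {}"
    "down_closed (S \<union> set (take (Suc j) xs))"
    using assms(1) unfolding growths_def by auto
  moreover have "xs ! j \<in> set xs"
    using assms(2) xs(1) by simp
  ultimately have "xs ! j \<notin> S \<union> set (take j xs)"
    using assms(2) nth_notin_set_take[of xs j] by blast
  moreover have "insert (xs ! j) (S \<union> set (take j xs)) = S \<union> set (take (Suc j) xs)"
    using assms(2) xs(1) by (simp add: take_Suc_conv_app_nth)
  ultimately show ?thesis
    unfolding outer_corners_def using xs(4) by simp
qed

definition column_list :: "nat \<Rightarrow> (nat \<times> nat) list" where
  "column_list m = map (\<lambda>i. (i, 0)) [0..<m]"

lemma length_column_list [simp]: "length (column_list m) = m"
  unfolding column_list_def by simp

lemma set_column_list [simp]: "set (column_list m) = column m"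
  unfolding column_list_def column_def by auto

lemma take_column_list: "j \<le> m \<Longrightarrow> take j (column_list m) = column_list j"
  unfolding column_list_def by (simp add: take_map)

lemma column_list_Suc: "column_list (Suc m) = column_list m @ [(m, 0)]"
  unfolding column_list_def by simp

lemma column_list_mem_growths: "column_list m \<in> growths {} m"
proof -
  have "down_closed (set (take j (column_list m)))" for j
    using young_diagram_column take_column_list[of j m]
    by (cases "j \<le> m") (simp_all add: young_diagram_def)
  moreover have "distinct (column_list m)"
    unfolding column_list_def by (simp add: distinct_map inj_on_def)
  ultimately show ?thesis
    unfolding growths_def by simp
qed

lemma card_growths_with_column_prefix:
  assumes "m \<le> n"
  shows "card {xs \<in> growths {} n. take m xs = column_list m} = card (growths (column m) (n - m))"
proof -
  have dc: "down_closed {}" unfolding down_closed_def by simp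
  have "bij_betw (\<lambda>ys. column_list m @ ys) (growths (column m) (n - m))
      {xs \<in> growths {} n. take m xs = column_list m}"
  proof (rule bij_betw_byWitness[where f' = "drop m"])
    show "(\<lambda>ys. column_list m @ ys) ` growths (column m) (n - m) \<subseteq> {xs \<in> growths {} n. take m xs = column_list m}"
      using append_mem_growths_iff[OF dc, where xs = "column_list m" and N = "n - m"] column_list_mem_growths assms
      by auto
    show "drop m ` {xs \<in> growths {} n. take m xs = column_list m} \<subseteq> growths (column m) (n - m)"
    proof clarify
      fix xs assume "xs \<in> growths {} n" "take m xs = column_list m"
      then have "column_list m @ drop m xs \<in> growths {} n"
        using append_take_drop_id[of m xs] by simp
      then show "drop m xs \<in> growths (column m) (n - m)"
        using append_mem_growths_iff[OF dc, where xs = "column_list m" and N = "n - m"] assms by simp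
    qed
    show "\<forall>ys \<in> growths (column m) (n - m). drop m (column_list m @ ys) = ys"
      by simp
    show "\<forall>xs \<in> {xs \<in> growths {} n. take m xs = column_list m}. column_list m @ drop m xs = xs"
    proof clarify
      fix xs assume "take m xs = column_list m"
      then show "column_list m @ drop m xs = xs"
        using append_take_drop_id[of m xs] by simp
    qed
  qed
  then show ?thesis
    by (rule bij_betw_same_card[symmetric])
qed

lemma take_growth_eq_column_list:
  assumes "xs \<in> growths {} n" "j \<le> n" "(0, 1) \<notin> set (take j xs)"
  shows "take j xs = column_list j"
  using assms(2,3)
proof (induction j)
  case 0
  then show ?case by (simp add: column_list_def)
next
  case (Suc j)
  have len: "length xs = n"
    using assms(1) unfolding growths_def by simp
  have IH: "take j xs = column_list j"
    using Suc set_take_subset_set_take[of j "Suc j" xs] by auto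
  have "xs ! j \<in> outer_corners ({} \<union> set (take j xs))"
    using nth_growth_mem_outer_corners[OF assms(1)] Suc.prems by simp
  then have "xs ! j \<in> {(j, 0), (0, 1)}"
    using IH outer_corners_column by auto
  moreover have "xs ! j \<in> set (take (Suc j) xs)"
    using Suc.prems len by (simp add: take_Suc_conv_app_nth)
  ultimately have "xs ! j = (j, 0)"
    using Suc.prems by auto
  then show ?case
    using IH Suc.prems len by (simp add: take_Suc_conv_app_nth column_list_Suc)
qed

lemma growths_column_prefix_split:
  assumes "m < n"
  shows "{xs \<in> growths {} n. take m xs = column_list m} =
    {xs \<in> growths {} n. take (Suc m) xs = column_list (Suc m)} \<union> {xs \<in> growths {} n. xs ! m = (0, 1)}"
    (is "?G m = ?G (Suc m) \<union> ?F")
proof (intro set_eqI iffI)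
  fix xs assume xs: "xs \<in> ?G m"
  then have "xs ! m \<in> outer_corners (column m)" and len: "length xs = n"
    using nth_growth_mem_outer_corners[of xs "{}" n m] assms unfolding growths_def by auto
  then show "xs \<in> ?G (Suc m) \<union> ?F"
    using xs outer_corners_column assms by (auto simp: take_Suc_conv_app_nth column_list_Suc)
next
  fix xs assume xs: "xs \<in> ?G (Suc m) \<union> ?F"
  show "xs \<in> ?G m"
  proof (cases "xs \<in> ?F")
    case True
    then have "(0, 1) \<notin> set (take m xs)"
      using nth_notin_set_take[of xs m] assms unfolding growths_def by auto
    then show ?thesis
      using True take_growth_eq_column_list[of xs n m] assms by simp
  next
    case False
    then show ?thesis
      using xs take_column_list[of m "Suc m"] by (auto simp: min_def dest: arg_cong[where f = "take m"])
  qed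
qed

lemma card_growths_nth_eq_first_row_cell:
  assumes "m < n"
  shows "int (card {xs \<in> growths {} n. xs ! m = (0, 1)}) =
    int (card (growths (column m) (n - m))) - int (card (growths (column (Suc m)) (n - Suc m)))"
proof -
  let ?G = "\<lambda>m. {xs \<in> growths {} n. take m xs = column_list m}"
  let ?F = "{xs \<in> growths {} n. xs ! m = (0, 1)}"
  have "?G (Suc m) \<inter> ?F = {}"
  proof (intro equals0I)
    fix xs assume xs: "xs \<in> ?G (Suc m) \<inter> ?F"
    then have "(m, 0) = xs ! m"
      using nth_take[of m "Suc m" xs] by (simp add: column_list_Suc nth_append)
    then show False
      using xs by simp
  qed
  moreover have "finite (?G (Suc m))" "finite ?F"
    using finite_growths[of "{}" n] by (simp_all add: young_diagram_def down_closed_def)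
  ultimately have "card (?G m) = card (?G (Suc m)) + card ?F"
    unfolding growths_column_prefix_split[OF assms] by (rule card_Un_disjoint[rotated 2])
  then show ?thesis
    using card_growths_with_column_prefix assms by simp
qed

section \<open>Standard Young tableaux as growths\<close>

lemma cells_eq_Sigma: "cells lam = (SIGMA i:{..<length lam}. {..<lam ! i})"
  unfolding cells_def by auto

lemma finite_cells: "finite (cells lam)"
  unfolding cells_eq_Sigma by auto

lemma card_cells: "card (cells lam) = sum_list lam"
  unfolding cells_eq_Sigma by (simp add: sum_list_sum_nth atLeast0LessThan)

lemma young_diagram_cells:
  assumes "sorted_wrt (\<ge>) lam"
  shows "young_diagram (cells lam)"
proof -
  have "lam ! Suc i \<le> lam ! i" if "Suc i < length lam" for i
    using sorted_wrt_nth_less[OF assms, of i "Suc i"] that by simp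
  then have "down_closed (cells lam)"
    by (intro down_closedI) (fastforce simp: cells_def)+
  then show ?thesis
    using finite_cells young_diagram_def by blast
qed

definition diagram_shape :: "(nat \<times> nat) set \<Rightarrow> nat list" where
  "diagram_shape S = map (row_length S) [0..<card {i. (i, 0) \<in> S}]"

lemma mem_first_column_iff:
  assumes "young_diagram S"
  shows "(i, 0) \<in> S \<longleftrightarrow> i < card {i. (i, 0) \<in> S}"
proof -
  have "{i. (i, 0) \<in> S} \<subseteq> fst ` S"
    by force
  then have "finite {i. (i, 0) \<in> S}"
    using assms unfolding young_diagram_def by (blast intro: finite_subset)
  then have "{i. (i, 0) \<in> S} = {..<card {i. (i, 0) \<in> S}}"
    using assms unfolding young_diagram_def by (intro down_closed_nat_set_eq_lessThan) (auto dest: down_closedD)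
  then show ?thesis by blast
qed

lemma
  assumes S: "young_diagram S"
  shows cells_diagram_shape: "cells (diagram_shape S) = S"
    and is_partition_diagram_shape: "is_partition (diagram_shape S) (card S)"
proof -
  let ?h = "card {i. (i, 0) \<in> S}"
  have len: "length (diagram_shape S) = ?h"
    and nth: "\<And>i. i < ?h \<Longrightarrow> diagram_shape S ! i = row_length S i"
    unfolding diagram_shape_def by simp_all
  have mem: "(i, j) \<in> S \<longleftrightarrow> i < ?h \<and> j < row_length S i" for i j
    using mem_young_diagram_iff[OF S] mem_first_column_iff[OF S] S
    unfolding young_diagram_def by (blast dest: down_closedD)
  show cells: "cells (diagram_shape S) = S"
  proof (intro set_eqI)
    fix c :: "nat \<times> nat"
    obtain i j where "c = (i, j)" by (cases c)
    then show "c \<in> cells (diagram_shape S) \<longleftrightarrow> c \<in> S"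
      using mem[of i j] nth[of i] by (auto simp: cells_def len)
  qed
  have pos: "0 < row_length S i" if "i < ?h" for i
    using that mem_first_column_iff[OF S, of i] mem_young_diagram_iff[OF S, of i 0] by blast
  have "sorted_wrt (\<ge>) (diagram_shape S)"
    unfolding sorted_wrt_iff_nth_less len using nth row_length_antimono[OF S] by simp
  moreover have "0 \<notin> set (diagram_shape S)"
    using pos nth len by (metis in_set_conv_nth less_irrefl)
  moreover have "sum_list (diagram_shape S) = card S"
    using card_cells[of "diagram_shape S"] cells by simp
  ultimately show "is_partition (diagram_shape S) (card S)"
    unfolding is_partition_def by blast
qed

lemma diagram_shape_cells:
  assumes "is_partition lam n"
  shows "diagram_shape (cells lam) = lam"
proof -
  have pos: "\<And>i. i < length lam \<Longrightarrow> 0 < lam ! i"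
    using assms unfolding is_partition_def by (metis gr0I nth_mem)
  then have "{i. (i, 0) \<in> cells lam} = {..<length lam}"
    unfolding cells_def by auto
  moreover have "row_length (cells lam) i = lam ! i" if "i < length lam" for i
    using that unfolding row_length_def cells_def by simp
  ultimately show ?thesis
    unfolding diagram_shape_def by (intro nth_equalityI) auto
qed

definition cell_sequence :: "nat \<Rightarrow> nat list \<times> (nat \<times> nat \<Rightarrow> nat) \<Rightarrow> (nat \<times> nat) list" where
  "cell_sequence n = (\<lambda>(lam, T). map (inv_into (cells lam) T) [1..<Suc n])"

lemma length_cell_sequence [simp]: "length (cell_sequence n p) = n"
  unfolding cell_sequence_def by (simp add: case_prod_beta)

lemma nth_cell_sequence_eq_iff:
  assumes "is_SYT n lam T" "i < n"
  shows "cell_sequence n (lam, T) ! i = c \<longleftrightarrow> c \<in> cells lam \<and> T c = Suc i"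
proof -
  have bij: "bij_betw T (cells lam) {1..n}"
    using assms(1) unfolding is_SYT_def by blast
  then have "Suc i \<in> T ` cells lam"
    using assms(2) by (simp add: bij_betw_def)
  moreover have "cell_sequence n (lam, T) ! i = inv_into (cells lam) T (Suc i)"
    unfolding cell_sequence_def using assms(2) by (simp del: upt_Suc)
  ultimately show ?thesis
    using bij unfolding bij_betw_def
    by (auto intro: inv_into_into f_inv_into_f inv_into_f_eq)
qed

lemma set_take_cell_sequence:
  assumes "is_SYT n lam T"
  shows "set (take j (cell_sequence n (lam, T))) = {c \<in> cells lam. T c \<le> j}"
proof (intro set_eqI)
  fix c
  have range: "c \<in> cells lam \<Longrightarrow> T c \<in> {1..n}"
    using assms unfolding is_SYT_def by (blast dest: PiE_mem)
  have "c \<in> set (take j (cell_sequence n (lam, T))) \<longleftrightarrow>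
      (\<exists>i < min j n. cell_sequence n (lam, T) ! i = c)"
    by (auto simp: in_set_conv_nth)
  also have "\<dots> \<longleftrightarrow> (\<exists>i. i < j \<and> i < n \<and> c \<in> cells lam \<and> T c = Suc i)"
    using nth_cell_sequence_eq_iff[OF assms, where c = c] by (simp cong: conj_cong)
  also have "\<dots> \<longleftrightarrow> c \<in> cells lam \<and> T c \<le> j"
    using range by (auto intro!: exI[of _ "T c - 1"])
  finally show "c \<in> set (take j (cell_sequence n (lam, T))) \<longleftrightarrow> c \<in> {c \<in> cells lam. T c \<le> j}"
    by simp
qed

lemma cell_sequence_mem_growths:
  assumes "is_SYT n lam T"
  shows "cell_sequence n (lam, T) \<in> growths {} n"
proof -
  let ?xs = "cell_sequence n (lam, T)"
  have "distinct ?xs"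
  proof (unfold distinct_conv_nth, intro allI impI)
    fix i j assume "i < length ?xs" "j < length ?xs" "i \<noteq> j"
    then show "?xs ! i \<noteq> ?xs ! j"
      using nth_cell_sequence_eq_iff[OF assms, of i "?xs ! j"] nth_cell_sequence_eq_iff[OF assms, of j "?xs ! j"]
      by auto
  qed
  moreover have "down_closed {c \<in> cells lam. T c \<le> j}" for j
  proof (intro down_closedI)
    have dc: "down_closed (cells lam)"
      using assms young_diagram_cells unfolding is_SYT_def is_partition_def young_diagram_def by blast
    fix a b
    show "(a, b) \<in> {c \<in> cells lam. T c \<le> j}" if "(Suc a, b) \<in> {c \<in> cells lam. T c \<le> j}"
      using that down_closedD[OF dc, of "Suc a" b a b] assms unfolding is_SYT_def by fastforce
    show "(a, b) \<in> {c \<in> cells lam. T c \<le> j}" if "(a, Suc b) \<in> {c \<in> cells lam. T c \<le> j}"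
      using that down_closedD[OF dc, of a "Suc b" a b] assms unfolding is_SYT_def by fastforce
  qed
  ultimately show ?thesis
    unfolding growths_def using set_take_cell_sequence[OF assms] by simp
qed

lemma set_cell_sequence:
  assumes "is_SYT n lam T"
  shows "set (cell_sequence n (lam, T)) = cells lam"
proof -
  have "T c \<le> n" if "c \<in> cells lam" for c
    using that assms unfolding is_SYT_def by (auto dest: PiE_mem)
  then show ?thesis
    using set_take_cell_sequence[OF assms, of n] by auto
qed

lemma cell_sequence_inj:
  assumes "is_SYT n lam T" "is_SYT n lam' T'" "cell_sequence n (lam, T) = cell_sequence n (lam', T')"
  shows "lam = lam'" "T = T'"
proof -
  have cells: "cells lam = cells lam'"
    using set_cell_sequence[OF assms(1)] set_cell_sequence[OF assms(2)] assms(3) by simp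
  have "is_partition lam n" "is_partition lam' n"
    using assms(1,2) unfolding is_SYT_def by blast+
  then show "lam = lam'"
    using diagram_shape_cells cells by metis
  show "T = T'"
  proof
    fix c
    show "T c = T' c"
    proof (cases "c \<in> cells lam")
      case True
      then have "T c \<in> {1..n}"
        using assms(1) unfolding is_SYT_def by (blast dest: PiE_mem)
      then obtain i where "i < n" "T c = Suc i"
        by (cases "T c") auto
      then show ?thesis
        using nth_cell_sequence_eq_iff[OF assms(1), of i c] nth_cell_sequence_eq_iff[OF assms(2), of i c]
          True cells assms(3) by simp
    next
      case False
      have "T \<in> cells lam \<rightarrow>\<^sub>E {1..n}" "T' \<in> cells lam' \<rightarrow>\<^sub>E {1..n}"
        using assms(1,2) unfolding is_SYT_def by blast+
      then show ?thesis
        using False cells PiE_arb by metis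
    qed
  qed
qed

definition position :: "'a list \<Rightarrow> 'a \<Rightarrow> nat" where
  "position xs c = (THE i. i < length xs \<and> xs ! i = c)"

lemma position_nth: "distinct xs \<Longrightarrow> i < length xs \<Longrightarrow> position xs (xs ! i) = i"
  unfolding position_def by (rule the_equality) (auto simp: nth_eq_iff_index_eq)

lemma nth_position: "distinct xs \<Longrightarrow> c \<in> set xs \<Longrightarrow> position xs c < length xs \<and> xs ! position xs c = c"
  by (auto simp: in_set_conv_nth position_nth)

lemma growth_position_less:
  assumes "xs \<in> growths {} n" "(a, b) \<in> set xs" "a' \<le> a" "b' \<le> b" "(a', b') \<noteq> (a, b)"
  shows "(a', b') \<in> set xs" "position xs (a', b') < position xs (a, b)"
proof -
  have xs: "length xs = n" "distinct xs" "down_closed (set (take (Suc (position xs (a, b))) xs))"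
    using assms(1) unfolding growths_def by auto
  let ?q = "position xs (a, b)"
  have q: "?q < n" "xs ! ?q = (a, b)"
    using nth_position[OF xs(2) assms(2)] xs(1) by auto
  then have "(a, b) \<in> set (take (Suc ?q) xs)"
    using xs(1) by (simp add: take_Suc_conv_app_nth)
  then have "(a', b') \<in> set (take (Suc ?q) xs)"
    using down_closedD[OF xs(3)] assms(3,4) by blast
  then obtain p where "p < length (take (Suc ?q) xs)" "take (Suc ?q) xs ! p = (a', b')"
    by (meson in_set_conv_nth)
  then have p: "p < Suc ?q" "p < n" "xs ! p = (a', b')"
    using xs(1) by auto
  then show "(a', b') \<in> set xs"
    using nth_mem[of p xs] xs(1) by simp
  have "p \<noteq> ?q"
    using p q assms(5) by auto
  then show "position xs (a', b') < ?q"
    using p position_nth[OF xs(2), of p] xs(1) by simp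
qed

lemma bij_betw_Suc_position:
  assumes "distinct xs"
  shows "bij_betw (\<lambda>c. Suc (position xs c)) (set xs) {1..length xs}"
proof -
  have "bij_betw (position xs) (set xs) {..<length xs}"
    by (rule bij_betw_byWitness[where f' = "(!) xs"]) (auto simp: assms nth_position position_nth)
  moreover have "bij_betw Suc {..<length xs} {1..length xs}"
    by (simp add: bij_betw_def image_Suc_lessThan)
  ultimately show ?thesis
    using bij_betw_trans[of "position xs" "set xs" "{..<length xs}" Suc] by (simp add: comp_def)
qed

definition tableau_of_growth :: "(nat \<times> nat) list \<Rightarrow> nat list \<times> (nat \<times> nat \<Rightarrow> nat)" where
  "tableau_of_growth xs = (diagram_shape (set xs), restrict (\<lambda>c. Suc (position xs c)) (set xs))"

lemma
  assumes "xs \<in> growths {} n"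
  shows tableau_of_growth_is_SYT: "tableau_of_growth xs \<in> {(lam, T). is_SYT n lam T}"
    and cell_sequence_tableau_of_growth: "cell_sequence n (tableau_of_growth xs) = xs"
proof -
  define lam where "lam = diagram_shape (set xs)"
  define T where "T = restrict (\<lambda>c. Suc (position xs c)) (set xs)"
  have xs: "length xs = n" "distinct xs" "down_closed ({} \<union> set (take n xs))"
    using assms unfolding growths_def by blast+
  then have S: "young_diagram (set xs)"
    unfolding young_diagram_def by simp
  have cells: "cells lam = set xs"
    unfolding lam_def by (rule cells_diagram_shape[OF S])
  have T_nth: "T (xs ! i) = Suc i" if "i < n" for i
    unfolding T_def using that xs(1) position_nth[OF xs(2), of i] by simp
  have "T \<in> cells lam \<rightarrow>\<^sub>E {1..n}"
    unfolding cells T_def using nth_position[OF xs(2)] xs(1) by (auto simp: Suc_le_eq)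
  moreover have "bij_betw T (cells lam) {1..n}"
    unfolding T_def cells using bij_betw_Suc_position[OF xs(2)] xs(1) by simp
  moreover have less: "T (a', b') < T (a, b)"
    if "(a, b) \<in> cells lam" "a' \<le> a" "b' \<le> b" "(a', b') \<noteq> (a, b)" for a b a' b'
    using growth_position_less[OF assms, of a b a' b'] that cells unfolding T_def by simp
  then have "\<forall>i j. (i, j) \<in> cells lam \<and> (i, Suc j) \<in> cells lam \<longrightarrow> T (i, j) < T (i, Suc j)"
    and "\<forall>i j. (i, j) \<in> cells lam \<and> (Suc i, j) \<in> cells lam \<longrightarrow> T (i, j) < T (Suc i, j)"
    by auto
  moreover have "is_partition lam n"
    unfolding lam_def using is_partition_diagram_shape[OF S] xs by (simp add: distinct_card)
  ultimately have syt: "is_SYT n lam T"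
    unfolding is_SYT_def by blast
  then show "tableau_of_growth xs \<in> {(lam, T). is_SYT n lam T}"
    unfolding tableau_of_growth_def lam_def T_def by simp
  have "cell_sequence n (lam, T) = xs"
    using nth_cell_sequence_eq_iff[OF syt] cells T_nth xs(1) by (intro nth_equalityI) auto
  then show "cell_sequence n (tableau_of_growth xs) = xs"
    unfolding tableau_of_growth_def lam_def T_def by simp
qed

lemma bij_betw_cell_sequence: "bij_betw (cell_sequence n) {(lam, T). is_SYT n lam T} (growths {} n)"
proof (rule bij_betw_byWitness[where f' = tableau_of_growth])
  show "\<forall>p\<in>{(lam, T). is_SYT n lam T}. tableau_of_growth (cell_sequence n p) = p"
  proof clarify
    fix lam T assume syt: "is_SYT n lam T"
    let ?p = "tableau_of_growth (cell_sequence n (lam, T))"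
    have "?p \<in> {(lam, T). is_SYT n lam T}" "cell_sequence n ?p = cell_sequence n (lam, T)"
      using cell_sequence_mem_growths[OF syt]
      by (rule tableau_of_growth_is_SYT, rule cell_sequence_tableau_of_growth)
    then show "?p = (lam, T)"
      using cell_sequence_inj[OF _ syt] by (cases ?p) auto
  qed
  show "\<forall>xs\<in>growths {} n. cell_sequence n (tableau_of_growth xs) = xs"
    using cell_sequence_tableau_of_growth by blast
  show "cell_sequence n ` {(lam, T). is_SYT n lam T} \<subseteq> growths {} n"
    using cell_sequence_mem_growths by auto
  show "tableau_of_growth ` growths {} n \<subseteq> {(lam, T). is_SYT n lam T}"
    by (intro image_subsetI tableau_of_growth_is_SYT)
qed

lemma f_syt_eq_card_growths:
  assumes "1 \<le> k" "k \<le> n"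
  shows "f_syt n k = card {xs \<in> growths {} n. xs ! (k - 1) = (0, 1)}"
proof -
  have "bij_betw (cell_sequence n)
      {p \<in> {(lam, T). is_SYT n lam T}. case p of (lam, T) \<Rightarrow> (0, 1) \<in> cells lam \<and> T (0, 1) = k}
      {xs \<in> growths {} n. xs ! (k - 1) = (0, 1)}"
  proof (rule bij_betw_Collect[OF bij_betw_cell_sequence])
    fix p assume "p \<in> {(lam, T). is_SYT n lam T}"
    then obtain lam T where "p = (lam, T)" "is_SYT n lam T" by blast
    then show "cell_sequence n p ! (k - 1) = (0, 1) \<longleftrightarrow>
        (case p of (lam, T) \<Rightarrow> (0, 1) \<in> cells lam \<and> T (0, 1) = k)"
      using nth_cell_sequence_eq_iff[of n lam T "k - 1" "(0, 1)"] assms by auto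
  qed
  moreover have "{p \<in> {(lam, T). is_SYT n lam T}. case p of (lam, T) \<Rightarrow> (0, 1) \<in> cells lam \<and> T (0, 1) = k}
      = {(lam, T). is_SYT n lam T \<and> (0, 1) \<in> cells lam \<and> T (0, 1) = k}"
    by auto
  ultimately have "bij_betw (cell_sequence n) {(lam, T). is_SYT n lam T \<and> (0, 1) \<in> cells lam \<and> T (0, 1) = k}
      {xs \<in> growths {} n. xs ! (k - 1) = (0, 1)}"
    by simp
  then show ?thesis
    unfolding f_syt_def by (rule bij_betw_same_card)
qed

section \<open>The entry in row 1, column 2\<close>

lemma sum_Suc_choose_mult:
  fixes g :: "nat \<Rightarrow> nat"
  shows "(\<Sum>i\<le>m. (Suc a choose i) * g i) = (\<Sum>i\<le>m. (a choose i) * g i) + (\<Sum>i<m. (a choose i) * g (Suc i))"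
  by (induction m) (simp_all add: algebra_simps)

lemma f_syt_eq_telephone_sum:
  assumes "1 \<le> k" "k \<le> n"
  shows "int (f_syt n k) = (\<Sum>i<k. int ((n - k choose i) * telephone (n - k + 1 - i)))
    - int ((n - k choose (k - 1)) * telephone (n - k - (k - 1)))
    - int ((n - k choose k) * telephone (n - k - k))"
proof -
  obtain m where m: "k = Suc m" using assms(1) by (cases k) auto
  define a where "a = n - k"
  have n: "n - m = Suc a" "n - Suc m = a"
    using assms unfolding a_def m by auto
  have "int (f_syt n k) = int (card (growths (column m) (Suc a))) - int (card (growths (column (Suc m)) a))"
    using f_syt_eq_card_growths[OF assms] card_growths_nth_eq_first_row_cell[of m n] assms n
    unfolding m by simp
  also have "\<dots> = int (\<Sum>i\<le>m. (Suc a choose i) * telephone (Suc a - i)) - int (\<Sum>i\<le>Suc m. (a choose i) * telephone (a - i))"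
    unfolding card_growths_column by simp
  also have "\<dots> = int (\<Sum>i<k. (a choose i) * telephone (a + 1 - i))
      - int ((a choose m) * telephone (a - m)) - int ((a choose Suc m) * telephone (a - Suc m))"
    unfolding sum_Suc_choose_mult m by (simp add: lessThan_Suc_atMost[symmetric])
  finally show ?thesis
    unfolding a_def m by simp
qed

lemma binom_mult_t_inv:
  assumes "a \<le> b"
  shows "binom (int a) (int i) * t_inv (int b - int i) = int ((a choose i) * telephone (b - i))"
proof (cases "i \<le> a")
  case True
  then have "t_inv (int b - int i) = int (telephone (b - i))"
    using assms t_inv_eq_telephone[of "b - i"] by (simp add: of_nat_diff)
  moreover have "binom (int a) (int i) = int (a choose i)"
    using True unfolding binom_def by simp
  ultimately show ?thesis
    by simp
qed (simp add: binom_def)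

theorem theorem3:
  fixes n k :: nat
  assumes "1 \<le> k" and "k \<le> n"
  shows "int (f_syt n k) =
    (\<Sum>j = 0..<int k. binom (int n - int k) (int k - j - 1) * t_inv (int n - 2 * int k + j + 2))
    - binom (int n - int k) (int k - 1) * t_inv (int n - 2 * int k + 1)
    - binom (int n - int k) (int k) * t_inv (int n - 2 * int k)"
proof -
  define a where "a = n - k"
  have n: "int n = int a + int k"
    using assms unfolding a_def by simp
  then have a: "int n - int k = int a"
    by simp
  have "(\<Sum>j = 0..<int k. binom (int a) (int k - j - 1) * t_inv (int n - 2 * int k + j + 2)) =
      (\<Sum>i<k. binom (int a) (int i) * t_inv (int (a + 1) - int i))"
    by (rule sum.reindex_bij_witness[of _ "\<lambda>i. int k - int i - 1" "\<lambda>j. nat (int k - j - 1)"])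
      (auto simp: n algebra_simps)
  also have "\<dots> = (\<Sum>i<k. int ((a choose i) * telephone (a + 1 - i)))"
    using binom_mult_t_inv[of a "a + 1"] by simp
  finally show ?thesis
    using f_syt_eq_telephone_sum[OF assms] binom_mult_t_inv[of a a "k - 1"] binom_mult_t_inv[of a a k] assms
    unfolding a a_def by (simp add: of_nat_diff algebra_simps)
qed

end
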